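(* Let $E$ be a real affine space of finite dimension, let $\mathcal P$ be a Yao-Yao partition of $E$ and let $x$ be its center. Then every affine half-space of $E$ of the form $\{y\in E: \ell(y)\ge 0\}$, with $\ell$ an affine form on $E$ satisfying $\ell(x)\ge 0$, contains an element of $\mathcal P$.
   Context: $\vec E$ denotes the vector space associated with $E$. A partition of $E$ is a collection $\mathcal P$ of subsets of $E$ with $\bigcup\mathcal P=E$ such that the interiors of any two distinct elements of $\mathcal P$ are disjoint. Yao-Yao partitions and their centers are defined by induction on the dimension: if $E=\{x\}$ has dimension $0$, the Yao-Yao partition of $E$ is $\{\{x\}\}$, with center $x$. If $\dim E=n\ge 1$, $\mathcal P$ is a Yao-Yao partition of $E$ with center $x$ if there exist an affine hyperplane $F$ of $E$, a vector $v\in\vec E\setminus\vec F$ and two Yao-Yao partitions $\mathcal P_1,\mathcal P_{-1}$ of $F$ having the same center $x$, such that $\mathcal P=\{A+\mathbb R_- v : A\in\mathcal P_{-1}\}\cup\{A+\mathbb R_+ v: A\in\mathcal P_1\}$. *)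

theory Defs
  imports "HOL-Analysis.Analysis"
begin

text \<open>A finite-dimensional real affine space E is modelled as an affine subset of
a Euclidean space 'a. Its direction (associated vector space) is the set of differences.\<close>

definition vec_dir :: "'a::real_vector set \<Rightarrow> 'a set" where
  "vec_dir S = {a - b | a b. a \<in> S \<and> b \<in> S}"

definition ray_minus :: "'a::real_vector set \<Rightarrow> 'a \<Rightarrow> 'a set" where
  "ray_minus A v = {a + t *\<^sub>R v | a t. a \<in> A \<and> t \<le> 0}"

definition ray_plus :: "'a::real_vector set \<Rightarrow> 'a \<Rightarrow> 'a set" where
  "ray_plus A v = {a + t *\<^sub>R v | a t. a \<in> A \<and> t \<ge> 0}"

inductive yao_yao :: "'a::euclidean_space set \<Rightarrow> 'a set set \<Rightarrow> 'a \<Rightarrow> bool" where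
  base: "yao_yao {x} {{x}} x"
| step: "\<lbrakk> affine E; aff_dim E \<ge> 1;
           affine F; F \<subseteq> E; aff_dim F = aff_dim E - 1;
           v \<in> vec_dir E; v \<notin> vec_dir F;
           yao_yao F P1 x; yao_yao F Pm1 x;
           P = (\<lambda>A. ray_minus A v) ` Pm1 \<union> (\<lambda>A. ray_plus A v) ` P1 \<rbrakk>
         \<Longrightarrow> yao_yao E P x"

definition affine_form_on :: "'a::real_vector set \<Rightarrow> ('a \<Rightarrow> real) \<Rightarrow> bool" where
  "affine_form_on E l \<longleftrightarrow>
     (\<forall>y\<in>E. \<forall>z\<in>E. \<forall>u::real. l ((1 - u) *\<^sub>R y + u *\<^sub>R z) = (1 - u) * l y + u * l z)"

end

theory Submission
  imports Defs
begin

text \<open>An affine form l on E changes at a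
constant rate d along the direction v, so l(a + t v) = l a + t d for every a in the
hyperplane F. By induction some cell A of the partition of F with the same center lies in
{l \<ge> 0}; if d \<ge> 0 the cell A + \<real>_+ v of the partition of E stays there, and
if d \<le> 0 the cell A + \<real>_- v does.\<close>

lemma vec_dir_uminus: "v \<in> vec_dir E \<Longrightarrow> - v \<in> vec_dir E"
  unfolding vec_dir_def by force

lemma affine_add_vec_dir:
  assumes "affine E" "a \<in> E" "v \<in> vec_dir E"
  shows "a + t *\<^sub>R v \<in> E"
  using assms mem_affine_3_minus unfolding vec_dir_def by blast

lemma ray_minus_eq_ray_plus_uminus: "ray_minus A v = ray_plus A (- v)"
proof -
  have "a + t *\<^sub>R v = a + (- t) *\<^sub>R (- v)" for a t by simp
  then show ?thesis unfolding ray_minus_def ray_plus_def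
    by (metis (no_types, opaque_lifting) neg_0_le_iff_le minus_minus)
qed

lemma affine_form_on_subset: "affine_form_on E l \<Longrightarrow> F \<subseteq> E \<Longrightarrow> affine_form_on F l"
  unfolding affine_form_on_def by blast

lemma affine_form_on_line_through:
  assumes "affine E" "affine_form_on E l" "a \<in> E" "v \<in> vec_dir E"
  shows "l (a + t *\<^sub>R v) = l a + t * (l (a + v) - l a)"
proof -
  have "a + v \<in> E"
    using affine_add_vec_dir[OF assms(1,3,4), of 1] by simp
  moreover have "a + t *\<^sub>R v = (1 - t) *\<^sub>R a + t *\<^sub>R (a + v)"
    by (simp add: algebra_simps)
  ultimately have "l (a + t *\<^sub>R v) = (1 - t) * l a + t * l (a + v)"
    using assms(2,3) unfolding affine_form_on_def by metis
  then show ?thesis by (simp add: algebra_simps)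
qed

lemma affine_form_on_increment:
  assumes "affine E" "affine_form_on E l" "a \<in> E" "b \<in> E" "v \<in> vec_dir E"
  shows "l (a + v) - l a = l (b + v) - l b"
proof -
  have av: "a + v \<in> E" and bv: "b + v \<in> E"
    using affine_add_vec_dir[OF assms(1) _ assms(5), of _ 1] assms(3,4) by simp_all
  \<comment> \<open>the midpoint of a + v and b is the midpoint of a and b + v\<close>
  have "(1 - 1/2) *\<^sub>R (a + v) + (1/2) *\<^sub>R b = (1 - 1/2) *\<^sub>R a + (1/2::real) *\<^sub>R (b + v)"
    by (simp add: algebra_simps)
  then have "(1 - 1/2) * l (a + v) + 1/2 * l b = (1 - 1/2) * l a + 1/2 * l (b + v)"
    using assms(2,3,4) av bv unfolding affine_form_on_def by metis
  then show ?thesis by simp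
qed

lemma affine_form_on_line:
  assumes "affine E" "affine_form_on E l" "a \<in> E" "b \<in> E" "v \<in> vec_dir E"
  shows "l (a + t *\<^sub>R v) = l a + t * (l (b + v) - l b)"
  using affine_form_on_line_through[OF assms(1-3,5)] affine_form_on_increment[OF assms] by simp

lemma ray_plus_subset_nonneg:
  assumes "affine E" "affine_form_on E l" "b \<in> E" "v \<in> vec_dir E" "l b \<le> l (b + v)"
    and "A \<subseteq> {y \<in> E. 0 \<le> l y}"
  shows "ray_plus A v \<subseteq> {y \<in> E. 0 \<le> l y}"
proof
  fix y assume "y \<in> ray_plus A v"
  then obtain a t where a: "a \<in> A" "0 \<le> t" and y: "y = a + t *\<^sub>R v"
    unfolding ray_plus_def by blast
  have "a \<in> E" "0 \<le> l a" using a assms(6) by auto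
  moreover have "0 \<le> t * (l (b + v) - l b)" using a(2) assms(5) by simp
  ultimately show "y \<in> {y \<in> E. 0 \<le> l y}"
    using y affine_add_vec_dir[OF assms(1) _ assms(4)] affine_form_on_line[OF assms(1,2) _ assms(3,4)]
    by auto
qed

lemma ray_plus_or_ray_minus_subset_nonneg:
  assumes "affine E" "affine_form_on E l" "b \<in> E" "v \<in> vec_dir E"
    and "A \<subseteq> {y \<in> E. 0 \<le> l y}" "A' \<subseteq> {y \<in> E. 0 \<le> l y}"
  shows "ray_plus A v \<subseteq> {y \<in> E. 0 \<le> l y} \<or> ray_minus A' v \<subseteq> {y \<in> E. 0 \<le> l y}"
proof (cases "l b \<le> l (b + v)")
  case True
  then show ?thesis using ray_plus_subset_nonneg[OF assms(1-4) True assms(5)] by blast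
next
  case False
  then have "l b \<le> l (b + - v)"
    using affine_form_on_line_through[OF assms(1-4), of "-1"] by simp
  then show ?thesis
    using ray_plus_subset_nonneg[OF assms(1-3) vec_dir_uminus[OF assms(4)] _ assms(6)]
    unfolding ray_minus_eq_ray_plus_uminus by blast
qed

lemma yao_yao_center_mem: "yao_yao E P x \<Longrightarrow> x \<in> E"
  by (induction rule: yao_yao.induct) auto

theorem proposition4:
  fixes E :: "'a::euclidean_space set" and P :: "'a set set" and x :: 'a
    and l :: "'a \<Rightarrow> real"
  assumes "yao_yao E P x"
    and "affine_form_on E l"
    and "l x \<ge> 0"
  shows "\<exists>A\<in>P. A \<subseteq> {y \<in> E. l y \<ge> 0}"
  using assms
proof (induction arbitrary: l rule: yao_yao.induct)
  case (base x)
  then show ?case by auto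
next
  case (step E F v P1 x Pm1 P)
  have "affine_form_on F l"
    using affine_form_on_subset step.prems(1) step.hyps(4) by blast
  then obtain A A' where A: "A \<in> P1" "A \<subseteq> {y \<in> E. 0 \<le> l y}"
    and A': "A' \<in> Pm1" "A' \<subseteq> {y \<in> E. 0 \<le> l y}"
    using step.IH step.prems(2) step.hyps(4) by blast
  have "x \<in> E" using yao_yao_center_mem[OF step.hyps(8)] step.hyps(4) by blast
  then have "ray_plus A v \<subseteq> {y \<in> E. 0 \<le> l y} \<or> ray_minus A' v \<subseteq> {y \<in> E. 0 \<le> l y}"
    using ray_plus_or_ray_minus_subset_nonneg[OF step.hyps(1) step.prems(1) _ step.hyps(6) A(2) A'(2)]
    by blast
  moreover have "ray_plus A v \<in> P" "ray_minus A' v \<in> P" using A(1) A'(1) step.hyps(10) by blast+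
  ultimately show ?case by blast
qed

end
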